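(* Let $\omega\ge1$ and $n>2$ be integers, $r=2^\omega$, $R=2^{\omega n}$, and let $p$ be a positive odd integer. Let $T\ge0$ be an integer and $T_i=\lfloor T/r^{i-1}\rfloor\bmod r$ for $i\ge1$. For $1\le i\le n-2$ let $M_i$ be an integer with $M_i\equiv r^{-n+i+1}\pmod p$, let $H_i=T_iM_i$, and let $T^{(n-2)}=\lfloor T/r^{n-2}\rfloor+\sum_{i=1}^{n-2}H_i$. Then $$TR^{-1}\equiv T^{(n-2)}r^{-2}\pmod p.$$
   Context: Negative powers of $r$ and $R$ denote powers of their inverses modulo $p$ (which exist since $p$ is odd). $TR^{-1}\bmod p$ is the Montgomery reduction $\mathrm{REDC}(T)$. *)

theory Defs
  imports "HOL-Number_Theory.Number_Theory"
begin

text \<open>Inverse of a modulo p (exists when a and p are coprime); negative powers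
  r^(-k) mod p are read as minv p (r^k).\<close>
definition minv :: "int \<Rightarrow> int \<Rightarrow> int" where
  "minv p a = (SOME x. [a * x = 1] (mod p))"

end

theory Submission
  imports Defs
begin

text \<open>Split T into its low base-r digits and the high part T div r^m, i.e.
  T = (T div r^m) r^m + \<Sum>_{i=1}^{m} T_i r^(i-1). Multiplying by u^m, where u is an inverse of r
  modulo p, every power r^k collapses against u^k, so the high part is left alone and the digit
  T_i picks up u^(m+1-i). For m = n - 2 and u = r^(-1) the factor u^(m+1-i) is exactly
  r^(-n+i+1) \<equiv> M_i, and the remaining factor u^2 = r^(-2) completes T R^(-1) = T u^m u^2.
  Of the hypotheses only the oddness of p matters: it makes r invertible modulo p.\<close>

lemma minv_inverse_cong:
  assumes "coprime a p"
  shows "[a * minv p a = 1] (mod p)"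
proof -
  obtain x where "[a * x = 1] (mod p)"
    using cong_solve_coprime_int[OF assms] by blast
  then show ?thesis unfolding minv_def by (rule someI)
qed

lemma minv_power_cong:
  assumes "coprime a p"
  shows "[minv p (a ^ k) = minv p a ^ k] (mod p)"
proof -
  have "coprime (a ^ k) p" using assms by simp
  have "[a ^ k * minv p (a ^ k) = 1] (mod p)"
    using minv_inverse_cong[OF \<open>coprime (a ^ k) p\<close>] .
  moreover have "[a ^ k * minv p a ^ k = 1] (mod p)"
    using cong_pow[OF minv_inverse_cong[OF assms], of k] by (simp add: power_mult_distrib)
  ultimately have "[a ^ k * minv p (a ^ k) = a ^ k * minv p a ^ k] (mod p)"
    by (rule cong_trans[OF _ cong_sym])
  then show ?thesis
    using cong_mult_lcancel[OF \<open>coprime (a ^ k) p\<close>] by blast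
qed

lemma div_power_digits_expansion:
  fixes T r :: int
  assumes "r > 0"
  shows "T = T div r ^ m * r ^ m + (\<Sum>i = 1..m. (T div r ^ (i - 1) mod r) * r ^ (i - 1))"
proof (induction m)
  case 0
  then show ?case by simp
next
  case (Suc m)
  have "T div r ^ Suc m = T div r ^ m div r"
    using assms by (metis power_Suc2 zdiv_zmult2_eq zero_le_power less_imp_le)
  then have "T div r ^ m * r ^ m = (T div r ^ Suc m * r + T div r ^ m mod r) * r ^ m"
    by simp
  then have "T div r ^ m * r ^ m = T div r ^ Suc m * r ^ Suc m + (T div r ^ m mod r) * r ^ m"
    by (simp add: algebra_simps)
  then show ?case using Suc by simp
qed

lemma digits_times_inverse_power_cong:
  fixes T r u p :: int
  assumes "r > 0" and "[r * u = 1] (mod p)"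
  shows "[T * u ^ m = T div r ^ m + (\<Sum>i = 1..m. (T div r ^ (i - 1) mod r) * u ^ (m + 1 - i))] (mod p)"
proof -
  define D where "D i = T div r ^ (i - 1) mod r" for i
  have collapse: "[(r * u) ^ k = 1] (mod p)" for k
    using cong_pow[OF assms(2), of k] by simp
  have digit: "D i * r ^ (i - 1) * u ^ m = D i * (r * u) ^ (i - 1) * u ^ (m + 1 - i)"
    if "i \<in> {1..m}" for i
  proof -
    have "u ^ m = u ^ (i - 1) * u ^ (m + 1 - i)"
      using that by (simp add: power_add[symmetric])
    then show ?thesis by (simp add: power_mult_distrib)
  qed
  have digits: "(\<Sum>i = 1..m. D i * r ^ (i - 1)) * u ^ m
      = (\<Sum>i = 1..m. D i * (r * u) ^ (i - 1) * u ^ (m + 1 - i))"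
    unfolding sum_distrib_right by (rule sum.cong[OF refl digit])
  have "T * u ^ m = (T div r ^ m * r ^ m + (\<Sum>i = 1..m. D i * r ^ (i - 1))) * u ^ m"
    using div_power_digits_expansion[OF assms(1), of T m] unfolding D_def by simp
  also have "\<dots> = T div r ^ m * (r * u) ^ m + (\<Sum>i = 1..m. D i * (r * u) ^ (i - 1) * u ^ (m + 1 - i))"
    unfolding distrib_right digits by (simp add: power_mult_distrib)
  also have "[\<dots> = T div r ^ m * 1 + (\<Sum>i = 1..m. D i * 1 * u ^ (m + 1 - i))] (mod p)"
    by (intro cong_add cong_mult cong_refl cong_sum collapse)
  finally show ?thesis unfolding D_def by simp
qed

theorem lemma3:
  fixes \<omega> n :: nat and p T :: int and M :: "nat \<Rightarrow> int"
  assumes "\<omega> \<ge> 1" and "n > 2"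
    and "p > 0" and "odd p"
    and "T \<ge> 0"
    and "\<forall>i. 1 \<le> i \<and> i \<le> n - 2 \<longrightarrow> [M i = minv p ((2 ^ \<omega>) ^ (n - i - 1))] (mod p)"
  shows "[T * minv p (2 ^ (\<omega> * n))
          = (T div (2 ^ \<omega>) ^ (n - 2)
             + (\<Sum>i = 1..n - 2. ((T div (2 ^ \<omega>) ^ (i - 1)) mod 2 ^ \<omega>) * M i))
            * minv p ((2 ^ \<omega>) ^ 2)] (mod p)"
proof -
  define r :: int where "r = 2 ^ \<omega>"
  define u where "u = minv p r"
  define m where "m = n - 2"
  have n: "n = m + 2" using assms(2) m_def by simp
  have "coprime r p" using assms(4) unfolding r_def by simp
  then have inv_pow: "[minv p (r ^ k) = u ^ k] (mod p)" for k
    unfolding u_def by (rule minv_power_cong)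
  have M_cong: "[u ^ (m + 1 - i) = M i] (mod p)" if "i \<in> {1..m}" for i
    using assms(6) that inv_pow[of "n - i - 1"] unfolding n r_def
    by (auto simp: Suc_diff_le intro: cong_sym cong_trans)
  let ?digit = "\<lambda>i. T div r ^ (i - 1) mod r"
  have "[T * minv p (r ^ n) = T * u ^ n] (mod p)"
    by (intro cong_mult cong_refl inv_pow)
  also have "T * u ^ n = T * u ^ m * u ^ 2"
    by (simp only: n power_add mult.assoc)
  also have "[T * u ^ m * u ^ 2 = (T div r ^ m + (\<Sum>i = 1..m. ?digit i * u ^ (m + 1 - i))) * u ^ 2] (mod p)"
    using digits_times_inverse_power_cong[of r u p T m] \<open>coprime r p\<close> minv_inverse_cong
    by (intro cong_mult cong_refl) (simp_all add: r_def u_def)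
  also have "[(T div r ^ m + (\<Sum>i = 1..m. ?digit i * u ^ (m + 1 - i))) * u ^ 2
      = (T div r ^ m + (\<Sum>i = 1..m. ?digit i * M i)) * minv p (r ^ 2)] (mod p)"
    by (intro cong_add cong_mult cong_refl cong_sum M_cong cong_sym[OF inv_pow])
  finally show ?thesis unfolding r_def m_def by (simp add: power_mult)
qed

end
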